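(* A conformal almost Hermitian structure $(M,J,c)$ of dimension $n\ge4$ is nearly Kähler Weyl, i.e. $(\nabla^c_XJ)X=0$ for all vector fields $X$, if and only if $\nabla^c$ and $\nabla^{gc}$ have the same geodesics. In particular, in that case they are projectively equivalent.
   Context: Conformal almost Hermitian: $J$ with $J^2=-\mathrm{id}$, $c$ a conformal class of Riemannian metrics with $J$ orthogonal. For $g\in c$ with Levi-Civita $\nabla$, $B_a:=\frac1{n-2}J^c{}_b\nabla_cJ^b{}_a$ and $\nabla^c_aY^b:=\nabla_aY^b-B_aY^b+B^bY_a-B_cY^c\delta^b_a$ (independent of $g\in c$). $G^c(X,Y):=-\frac12J(\nabla^c_YJ)X$, $\nabla^{gc}_XY:=\nabla^c_XY+G^c(Y,X)$. Geodesics of a connection $D$ are curves with $D_{\dot\gamma}\dot\gamma=0$. *)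

theory Defs
  imports "HOL-Analysis.Analysis"
begin

text \<open>Local (coordinate) model: an open set U of R^n, points real^'n,
 endomorphism/metric fields as matrix-valued maps real^'n \<Rightarrow> real^'n^'n.
 A linear connection D on U is encoded by its Christoffel map Gam, i.e.
 D_X Y (p) = DY(p) X + Gam p X (Y p).\<close>

fun iter_dd :: "('a::real_normed_vector) list \<Rightarrow> ('a \<Rightarrow> 'b::real_normed_vector) \<Rightarrow> 'a \<Rightarrow> 'b" where
  "iter_dd [] f = f"
| "iter_dd (v # vs) f = (\<lambda>p. frechet_derivative (iter_dd vs f) (at p) v)"

definition smooth_on :: "('a::real_normed_vector) set \<Rightarrow> ('a \<Rightarrow> 'b::real_normed_vector) \<Rightarrow> bool" where
  "smooth_on U f \<longleftrightarrow> (\<forall>vs. \<forall>p\<in>U. iter_dd vs f differentiable (at p))"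

definition gip :: "(real^'n \<Rightarrow> real^'n^'n) \<Rightarrow> real^'n \<Rightarrow> real^'n \<Rightarrow> real^'n \<Rightarrow> real" where
  "gip g p X Y = X \<bullet> (g p *v Y)"

text \<open>Levi-Civita connection of g (Koszul formula in coordinates).\<close>
definition LC :: "(real^'n \<Rightarrow> real^'n^'n) \<Rightarrow> real^'n \<Rightarrow> real^'n \<Rightarrow> real^'n \<Rightarrow> real^'n" where
  "LC g p X Y = matrix_inv (g p) *v (\<chi> k. (1/2) *
      (  Y \<bullet> (frechet_derivative g (at p) X *v axis k 1)
       + X \<bullet> (frechet_derivative g (at p) Y *v axis k 1)
       - X \<bullet> (frechet_derivative g (at p) (axis k 1) *v Y)))"

definition covJ :: "(real^'n \<Rightarrow> real^'n \<Rightarrow> real^'n \<Rightarrow> real^'n) \<Rightarrow> (real^'n \<Rightarrow> real^'n^'n)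
    \<Rightarrow> real^'n \<Rightarrow> real^'n \<Rightarrow> real^'n \<Rightarrow> real^'n" where
  "covJ Gam J p Z W = frechet_derivative J (at p) Z *v W + Gam p Z (J p *v W) - J p *v Gam p Z W"

text \<open>B_a = 1/(n-2) J^c_b nabla_c J^b_a, i.e. B(X) = 1/(n-2) tr(Z \<mapsto> J (nabla_Z J) X).\<close>
definition Bform :: "(real^'n \<Rightarrow> real^'n^'n) \<Rightarrow> (real^'n \<Rightarrow> real^'n^'n) \<Rightarrow> real^'n \<Rightarrow> real^'n \<Rightarrow> real" where
  "Bform g J p X = (1 / (real CARD('n) - 2)) *
      (\<Sum>c\<in>UNIV. (J p *v covJ (LC g) J p (axis c 1) X) $ c)"

definition Bsharp :: "(real^'n \<Rightarrow> real^'n^'n) \<Rightarrow> (real^'n \<Rightarrow> real^'n^'n) \<Rightarrow> real^'n \<Rightarrow> real^'n" where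
  "Bsharp g J p = matrix_inv (g p) *v (\<chi> a. Bform g J p (axis a 1))"

definition Gam_c :: "(real^'n \<Rightarrow> real^'n^'n) \<Rightarrow> (real^'n \<Rightarrow> real^'n^'n) \<Rightarrow> real^'n \<Rightarrow> real^'n \<Rightarrow> real^'n \<Rightarrow> real^'n" where
  "Gam_c g J p X Y = LC g p X Y - Bform g J p X *\<^sub>R Y + gip g p X Y *\<^sub>R Bsharp g J p - Bform g J p Y *\<^sub>R X"

definition Gc :: "(real^'n \<Rightarrow> real^'n^'n) \<Rightarrow> (real^'n \<Rightarrow> real^'n^'n) \<Rightarrow> real^'n \<Rightarrow> real^'n \<Rightarrow> real^'n \<Rightarrow> real^'n" where
  "Gc g J p X Y = - ((1/2) *\<^sub>R (J p *v covJ (Gam_c g J) J p Y X))"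

definition Gam_gc :: "(real^'n \<Rightarrow> real^'n^'n) \<Rightarrow> (real^'n \<Rightarrow> real^'n^'n) \<Rightarrow> real^'n \<Rightarrow> real^'n \<Rightarrow> real^'n \<Rightarrow> real^'n" where
  "Gam_gc g J p X Y = Gam_c g J p X Y + Gc g J p Y X"

definition geodesic :: "(real^'n \<Rightarrow> real^'n \<Rightarrow> real^'n \<Rightarrow> real^'n) \<Rightarrow> (real^'n) set
    \<Rightarrow> real set \<Rightarrow> (real \<Rightarrow> real^'n) \<Rightarrow> bool" where
  "geodesic Gam U I \<gamma> \<longleftrightarrow>
     (\<forall>t\<in>I. \<gamma> t \<in> U \<and> \<gamma> differentiable (at t)
        \<and> (\<lambda>s. vector_derivative \<gamma> (at s)) differentiable (at t)
        \<and> vector_derivative (\<lambda>s. vector_derivative \<gamma> (at s)) (at t)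
            + Gam (\<gamma> t) (vector_derivative \<gamma> (at t)) (vector_derivative \<gamma> (at t)) = 0)"

definition same_geodesics where
  "same_geodesics Gam1 Gam2 U \<longleftrightarrow>
     (\<forall>I \<gamma>. open I \<and> is_interval I \<longrightarrow> (geodesic Gam1 U I \<gamma> \<longleftrightarrow> geodesic Gam2 U I \<gamma>))"

text \<open>Projective equivalence (for connections possibly with torsion): the symmetric
 parts differ by rho(X) Y + rho(Y) X for a 1-form rho.\<close>
definition proj_equiv where
  "proj_equiv Gam1 Gam2 U \<longleftrightarrow>
     (\<exists>\<rho> :: real^'n \<Rightarrow> real^'n \<Rightarrow> real. \<forall>p\<in>U. linear (\<rho> p) \<and>
        (\<forall>X Y. (1/2) *\<^sub>R (Gam2 p X Y + Gam2 p Y X) - (1/2) *\<^sub>R (Gam1 p X Y + Gam1 p Y X)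
               = \<rho> p X *\<^sub>R Y + \<rho> p Y *\<^sub>R X))"

definition nearly_kaehler_weyl where
  "nearly_kaehler_weyl g J U \<longleftrightarrow> (\<forall>p\<in>U. \<forall>X. covJ (Gam_c g J) J p X X = 0)"

definition conf_almost_hermitian :: "(real^'n) set \<Rightarrow> (real^'n \<Rightarrow> real^'n^'n) \<Rightarrow> (real^'n \<Rightarrow> real^'n^'n) \<Rightarrow> bool" where
  "conf_almost_hermitian U g J \<longleftrightarrow> open U \<and> smooth_on U g \<and> smooth_on U J \<and>
     (\<forall>p\<in>U. transpose (g p) = g p \<and> (\<forall>X. X \<noteq> 0 \<longrightarrow> gip g p X X > 0)
        \<and> J p ** J p = - mat 1
        \<and> (\<forall>X Y. gip g p (J p *v X) (J p *v Y) = gip g p X Y))"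

end

theory Submission
  imports Defs
begin

text \<open>Since \<open>G\<^sup>c(X,X) = -1/2 J (\<nabla>\<^sup>c\<^sub>X J) X\<close> and \<open>J\<close> is invertible, the quadratic parts
  \<open>\<Gamma>(X,X)\<close> of \<open>\<nabla>\<^sup>c\<close> and \<open>\<nabla>\<^sup>g\<^sup>c\<close> agree exactly when the structure is nearly Kaehler Weyl.
  Connections with the same quadratic part have the same geodesics. Conversely, the Christoffel
  map of \<open>\<nabla>\<^sup>c\<close> is locally Lipschitz because \<open>g\<close> and \<open>J\<close> are smooth, so by Picard-Lindeloef
  every \<open>(p, X)\<close> is the initial datum of a \<open>\<nabla>\<^sup>c\<close>-geodesic; evaluating both geodesic equations
  at \<open>t = 0\<close> recovers the equality of the quadratic parts. Finally, polarising
  \<open>(\<nabla>\<^sup>c\<^sub>X J) X = 0\<close> shows that \<open>(\<nabla>\<^sup>c\<^sub>X J) Y\<close> is skew in \<open>X, Y\<close>, so the symmetric parts of the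
  two connections coincide: they are projectively equivalent with \<open>\<rho> = 0\<close>.\<close>

section \<open>Local existence for autonomous ODEs\<close>

lemma norm_integral_le_interval:
  fixes f :: "real \<Rightarrow> 'a::banach"
  assumes f: "continuous_on {a..b} f" and u: "u \<in> {a..b}"
    and B: "\<And>s. s \<in> {a..b} \<Longrightarrow> norm (f s) \<le> B"
  shows "norm (integral {a..u} f) \<le> B * (b - a)"
proof -
  have "0 \<le> B" using B[of a] u by (auto intro: order_trans[OF norm_ge_zero])
  have "f integrable_on {a..u}"
    using u by (intro integrable_continuous_real continuous_on_subset[OF f]) auto
  then have "norm (integral {a..u} f) \<le> B * (u - a)"
    using integrable_bound[of B f a u] B u \<open>0 \<le> B\<close> by auto
  also have "\<dots> \<le> B * (b - a)" using \<open>0 \<le> B\<close> u by (auto intro!: mult_left_mono)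
  finally show ?thesis .
qed

lemma norm_integral_diff_le_lipschitz:
  fixes H :: "'a::metric_space \<Rightarrow> 'b::banach"
  assumes H: "L-lipschitz_on K H"
    and cx: "continuous_on {a..b} (\<lambda>s. H (x s))" and cy: "continuous_on {a..b} (\<lambda>s. H (y s))"
    and xy: "\<And>s. s \<in> {a..b} \<Longrightarrow> x s \<in> K \<and> y s \<in> K \<and> dist (x s) (y s) \<le> d"
    and u: "u \<in> {a..b}"
  shows "norm (integral {a..u} (\<lambda>s. H (x s)) - integral {a..u} (\<lambda>s. H (y s))) \<le> L * d * (b - a)"
proof -
  have int: "(\<lambda>s. H (z s)) integrable_on {a..u}" if "continuous_on {a..b} (\<lambda>s. H (z s))" for z
    using u by (intro integrable_continuous_real continuous_on_subset[OF that]) auto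
  have "norm (integral {a..u} (\<lambda>s. H (x s) - H (y s))) \<le> L * d * (b - a)"
  proof (rule norm_integral_le_interval[OF _ u])
    show "continuous_on {a..b} (\<lambda>s. H (x s) - H (y s))" using cx cy by (intro continuous_intros)
    fix s assume s: "s \<in> {a..b}"
    have "dist (H (x s)) (H (y s)) \<le> L * dist (x s) (y s)"
      using xy[OF s] by (intro lipschitz_onD[OF H]) auto
    also have "\<dots> \<le> L * d" using xy[OF s] lipschitz_on_nonneg[OF H] by (intro mult_left_mono) auto
    finally show "norm (H (x s) - H (y s)) \<le> L * d" by (simp add: dist_norm)
  qed
  moreover have "integral {a..u} (\<lambda>s. H (x s) - H (y s))
      = integral {a..u} (\<lambda>s. H (x s)) - integral {a..u} (\<lambda>s. H (y s))"
    by (rule integral_diff) (use int cx cy in auto)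
  ultimately show ?thesis by simp
qed

lemma integral_equation_has_vector_derivative:
  fixes H :: "'a::banach \<Rightarrow> 'a"
  assumes cont: "continuous_on {a..b} (\<lambda>s. H (x s))"
    and eq: "\<And>u. u \<in> {a<..<b} \<Longrightarrow> x u = c + integral {a..u} (\<lambda>s. H (x s))"
    and t: "t \<in> {a<..<b}"
  shows "(x has_vector_derivative H (x t)) (at t)"
proof -
  have "((\<lambda>u. integral {a..u} (\<lambda>s. H (x s))) has_vector_derivative H (x t)) (at t within {a<..<b})"
    by (rule has_vector_derivative_within_subset[OF integral_has_vector_derivative[OF cont]])
      (use t in auto)
  then have "((\<lambda>u. c + integral {a..u} (\<lambda>s. H (x s))) has_vector_derivative H (x t)) (at t)"
    using at_within_open[OF t open_greaterThanLessThan] by (auto intro: derivative_eq_intros)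
  then show ?thesis
    by (rule has_vector_derivative_transform_within_open[OF _ open_greaterThanLessThan t]) (simp add: eq)
qed

text \<open>Subtracting the integral up to \<open>0\<close> gives \<open>\<integral>\<^sub>0\<^sup>u\<close> for \<open>u\<close> of either sign (an integral over
  \<open>{0..u}\<close> would vanish for \<open>u < 0\<close>); \<open>ext_cont\<close> extends the result constantly outside
  \<open>[-e, e]\<close>, so that the map acts on bounded continuous functions on the whole line.\<close>

definition picard_map ::
    "('a::banach \<Rightarrow> 'a) \<Rightarrow> 'a \<Rightarrow> real \<Rightarrow> (real \<Rightarrow> 'a) \<Rightarrow> real \<Rightarrow> 'a" where
  "picard_map H z0 e x =
     ext_cont (\<lambda>u. z0 + (integral {-e..u} (\<lambda>s. H (x s)) - integral {-e..0} (\<lambda>s. H (x s)))) (-e) e"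

lemma clamp_real_in_interval: "0 \<le> e \<Longrightarrow> clamp (-e) e (t::real) \<in> {-e..e}"
  using clamp_in_interval[of "-e" e t] by simp

lemma picard_map_clamp:
  "picard_map H z0 e x t =
    z0 + (integral {-e..clamp (-e) e t} (\<lambda>s. H (x s)) - integral {-e..0} (\<lambda>s. H (x s)))"
  by (simp add: picard_map_def ext_cont_def)

lemma picard_map_eq:
  "u \<in> {-e..e} \<Longrightarrow>
    picard_map H z0 e x u = z0 + (integral {-e..u} (\<lambda>s. H (x s)) - integral {-e..0} (\<lambda>s. H (x s)))"
  by (simp add: picard_map_def)

lemma continuous_on_picard_map:
  assumes "continuous_on {-e..e} (\<lambda>s. H (x s))"
  shows "continuous_on S (picard_map H z0 e x)"
proof -
  have "continuous_on {-e..e} (\<lambda>u. integral {-e..u} (\<lambda>s. H (x s)))"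
    by (rule indefinite_integral_continuous_1[OF integrable_continuous_real[OF assms]])
  then show ?thesis
    unfolding picard_map_def by (intro continuous_on_ext_cont) (auto intro!: continuous_intros)
qed

lemma picard_map_in_cball:
  assumes cont: "continuous_on {-e..e} (\<lambda>s. H (x s))"
    and M: "\<And>s. s \<in> {-e..e} \<Longrightarrow> norm (H (x s)) \<le> M" and e: "0 \<le> e" "4 * e * M \<le> r"
  shows "picard_map H z0 e x t \<in> cball z0 r"
proof -
  have bound: "norm (integral {-e..u} (\<lambda>s. H (x s))) \<le> M * (e - - e)" if "u \<in> {-e..e}" for u
    by (rule norm_integral_le_interval[OF cont that M])
  have "norm (picard_map H z0 e x t - z0) \<le> norm (integral {-e..clamp (-e) e t} (\<lambda>s. H (x s)))
      + norm (integral {-e..0} (\<lambda>s. H (x s)))"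
    unfolding picard_map_clamp by (simp add: norm_triangle_ineq4)
  also have "\<dots> \<le> M * (2*e) + M * (2*e)"
    using bound[OF clamp_real_in_interval] bound[of 0] e(1) by (intro add_mono) auto
  finally show ?thesis using e(2) by (simp add: dist_norm norm_minus_commute mult_ac)
qed

lemma dist_picard_map_le:
  assumes L: "L-lipschitz_on K H"
    and cx: "continuous_on {-e..e} (\<lambda>s. H (x s))" and cy: "continuous_on {-e..e} (\<lambda>s. H (y s))"
    and xy: "\<And>s. s \<in> {-e..e} \<Longrightarrow> x s \<in> K \<and> y s \<in> K \<and> dist (x s) (y s) \<le> d"
    and e: "0 \<le> e"
  shows "dist (picard_map H z0 e x t) (picard_map H z0 e y t) \<le> 4 * e * L * d"
proof -
  define D where "D u = integral {-e..u} (\<lambda>s. H (x s)) - integral {-e..u} (\<lambda>s. H (y s))" for u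
  have bound: "norm (D u) \<le> L * d * (e - - e)" if "u \<in> {-e..e}" for u
    unfolding D_def by (rule norm_integral_diff_le_lipschitz[OF L cx cy xy that])
  have "picard_map H z0 e x t - picard_map H z0 e y t = D (clamp (-e) e t) - D 0"
    unfolding picard_map_clamp D_def by (simp add: algebra_simps)
  then have "dist (picard_map H z0 e x t) (picard_map H z0 e y t) \<le> norm (D (clamp (-e) e t)) + norm (D 0)"
    by (simp add: dist_norm norm_triangle_ineq4)
  also have "\<dots> \<le> L * d * (2*e) + L * d * (2*e)"
    using bound[OF clamp_real_in_interval] bound[of 0] e by (intro add_mono) auto
  finally show ?thesis by (simp add: algebra_simps)
qed

lemma picard_fixpoint:
  fixes H :: "'a::banach \<Rightarrow> 'a"
  assumes L: "L-lipschitz_on (cball z0 r) H" and M: "\<And>z. z \<in> cball z0 r \<Longrightarrow> norm (H z) \<le> M"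
    and r: "0 \<le> r" and e: "0 < e" "4 * e * M \<le> r" "4 * e * L \<le> 1/2"
  obtains x where "\<And>t. x t \<in> cball z0 r" "continuous_on UNIV x" "picard_map H z0 e x = x"
proof -
  define S where "S = PiC UNIV (\<lambda>_::real. cball z0 r)"
  have S_iff: "\<phi> \<in> S \<longleftrightarrow> (\<forall>t. \<phi> t \<in> cball z0 r)" for \<phi>
    by (auto simp: S_def mem_PiC_iff)
  have cont: "continuous_on {-e..e} (\<lambda>s. H (\<phi> s))" if "\<phi> \<in> S" for \<phi>
    using that unfolding S_iff
    by (intro continuous_on_compose2[OF lipschitz_on_continuous_on[OF L]]) auto
  have in_cball: "picard_map H z0 e \<phi> t \<in> cball z0 r" if "\<phi> \<in> S" for \<phi> t
    using that e M by (intro picard_map_in_cball[where H=H and x="apply_bcontfun \<phi>", OF cont[OF that]])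
      (auto simp: S_iff)
  have bcontfun: "picard_map H z0 e \<phi> \<in> bcontfun" if "\<phi> \<in> S" for \<phi>
  proof (rule bcontfun_normI)
    show "continuous_on UNIV (picard_map H z0 e \<phi>)"
      by (rule continuous_on_picard_map[where x="apply_bcontfun \<phi>", OF cont[OF that]])
    show "norm (picard_map H z0 e \<phi> t) \<le> norm z0 + r" for t
      using in_cball[OF that, of t] norm_triangle_sub[of "picard_map H z0 e \<phi> t" z0]
      by (auto simp: dist_norm norm_minus_commute)
  qed
  define T where "T \<phi> = Bcontfun (picard_map H z0 e \<phi>)" for \<phi> :: "real \<Rightarrow>\<^sub>C 'a"
  have T_apply: "apply_bcontfun (T \<phi>) = picard_map H z0 e \<phi>" if "\<phi> \<in> S" for \<phi>
    using bcontfun[OF that] by (simp add: T_def Bcontfun_inverse)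
  have "\<exists>!\<phi>\<in>S. T \<phi> = \<phi>"
  proof (rule Banach_fix[where c="1/2"])
    show "complete S" unfolding S_def by (intro complete_eq_closed[THEN iffD2] closed_PiC) auto
    show "S \<noteq> {}" using S_iff[of "const_bcontfun z0"] r by (auto simp: const_bcontfun.rep_eq)
    show "T ` S \<subseteq> S" using T_apply in_cball S_iff by auto
    fix \<phi> \<psi> assume \<phi>: "\<phi> \<in> S" and \<psi>: "\<psi> \<in> S"
    show "dist (T \<phi>) (T \<psi>) \<le> 1/2 * dist \<phi> \<psi>"
    proof (rule dist_bound)
      fix t
      have "dist (T \<phi> t) (T \<psi> t) \<le> 4 * e * L * dist \<phi> \<psi>"
        unfolding T_apply[OF \<phi>] T_apply[OF \<psi>]
        by (rule dist_picard_map_le[where x="apply_bcontfun \<phi>" and y="apply_bcontfun \<psi>",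
              OF L cont[OF \<phi>] cont[OF \<psi>]])
           (use \<phi> \<psi> S_iff dist_bounded e in auto)
      also have "\<dots> \<le> 1/2 * dist \<phi> \<psi>" by (rule mult_right_mono[OF e(3) zero_le_dist])
      finally show "dist (T \<phi> t) (T \<psi> t) \<le> 1/2 * dist \<phi> \<psi>" .
    qed
  qed auto
  then obtain \<phi> where \<phi>: "\<phi> \<in> S" "T \<phi> = \<phi>" by blast
  show ?thesis
  proof (rule that)
    show "\<phi> t \<in> cball z0 r" for t using \<phi>(1) S_iff by blast
    show "picard_map H z0 e \<phi> = \<phi>" using T_apply[OF \<phi>(1)] \<phi>(2) by simp
  qed simp
qed

lemma local_ode_solution_exists:
  fixes H :: "'a::banach \<Rightarrow> 'a"
  assumes r: "0 < r" and L: "L-lipschitz_on (cball z0 r) H"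
    and M: "\<And>z. z \<in> cball z0 r \<Longrightarrow> norm (H z) \<le> M"
  obtains e x where "0 < e" "x 0 = z0"
    "\<And>t. t \<in> {-e<..<e} \<Longrightarrow> x t \<in> cball z0 r \<and> (x has_vector_derivative H (x t)) (at t)"
proof -
  have "0 \<le> M" using M[of z0] r by (auto intro: order_trans[OF norm_ge_zero])
  have "0 \<le> L" using L by (rule lipschitz_on_nonneg)
  define e where "e = min (r / (4 * (M + 1))) (1 / (8 * (L + 1)))"
  have e: "0 < e" "4 * e * M \<le> r" "4 * e * L \<le> 1/2"
  proof -
    show "0 < e" using r \<open>0 \<le> M\<close> \<open>0 \<le> L\<close> by (simp add: e_def)
    have "e \<le> r / (4 * (M + 1))" "e \<le> 1 / (8 * (L + 1))" by (simp_all add: e_def)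
    then have "4 * e * (M + 1) \<le> r" "8 * e * (L + 1) \<le> 1"
      using \<open>0 \<le> M\<close> \<open>0 \<le> L\<close> by (simp_all add: field_simps)
    then show "4 * e * M \<le> r" "4 * e * L \<le> 1/2" using \<open>0 < e\<close> by (auto simp: algebra_simps)
  qed
  obtain x where x: "\<And>t. x t \<in> cball z0 r" "continuous_on UNIV x" "picard_map H z0 e x = x"
    using picard_fixpoint[OF L M less_imp_le[OF r] e] by blast
  have cont: "continuous_on {-e..e} (\<lambda>s. H (x s))"
    by (rule continuous_on_compose2[OF lipschitz_on_continuous_on[OF L]])
      (use x(1,2) in \<open>auto intro: continuous_on_subset\<close>)
  have eq: "x u = (z0 - integral {-e..0} (\<lambda>s. H (x s))) + integral {-e..u} (\<lambda>s. H (x s))"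
    if "u \<in> {-e<..<e}" for u
    using picard_map_eq[of u e H z0 x] that x(3) by auto
  show ?thesis
  proof (rule that[OF e(1)])
    show "x 0 = z0" using picard_map_eq[of 0 e H z0 x] e(1) x(3) by simp
    show "x t \<in> cball z0 r \<and> (x has_vector_derivative H (x t)) (at t)" if "t \<in> {-e<..<e}" for t
      using x(1) integral_equation_has_vector_derivative[OF cont eq that] by auto
  qed
qed

section \<open>Bounded Lipschitz maps\<close>

definition bounded_lipschitz_on ::
    "'a::metric_space set \<Rightarrow> ('a \<Rightarrow> 'b::real_normed_vector) \<Rightarrow> bool" where
  "bounded_lipschitz_on S f \<longleftrightarrow> bounded (f ` S) \<and> (\<exists>L. L-lipschitz_on S f)"

lemma bounded_lipschitz_onI:
  "(\<And>z. z \<in> S \<Longrightarrow> norm (f z) \<le> B) \<Longrightarrow> L-lipschitz_on S f \<Longrightarrow> bounded_lipschitz_on S f"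
  unfolding bounded_lipschitz_on_def bounded_iff by blast

lemma bounded_lipschitz_onE:
  assumes "bounded_lipschitz_on S f"
  obtains B L where "\<And>z. z \<in> S \<Longrightarrow> norm (f z) \<le> B" "0 \<le> B" "L-lipschitz_on S f"
proof -
  obtain B L where "\<forall>z\<in>S. norm (f z) \<le> B" "L-lipschitz_on S f"
    using assms unfolding bounded_lipschitz_on_def bounded_iff by blast
  then show ?thesis using that[of "max B 0" L] by force
qed

lemma bounded_lipschitz_on_const: "bounded_lipschitz_on S (\<lambda>z. c)"
  by (rule bounded_lipschitz_onI[where B="norm c" and L=0]) (auto intro: lipschitz_on_constant)

lemma bounded_lipschitz_on_add:
  assumes "bounded_lipschitz_on S f" "bounded_lipschitz_on S g"
  shows "bounded_lipschitz_on S (\<lambda>z. f z + g z)"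
proof -
  obtain Bf Lf Bg Lg where "\<And>z. z \<in> S \<Longrightarrow> norm (f z) \<le> Bf" "Lf-lipschitz_on S f"
    "\<And>z. z \<in> S \<Longrightarrow> norm (g z) \<le> Bg" "Lg-lipschitz_on S g"
    using assms by (metis bounded_lipschitz_onE)
  then show ?thesis
    by (intro bounded_lipschitz_onI[where B="Bf + Bg" and L="Lf + Lg"] lipschitz_on_add)
      (auto intro: order_trans[OF norm_triangle_ineq] add_mono)
qed

lemma bounded_lipschitz_on_minus: "bounded_lipschitz_on S f \<Longrightarrow> bounded_lipschitz_on S (\<lambda>z. - f z)"
  by (elim bounded_lipschitz_onE, rule bounded_lipschitz_onI) auto

lemma bounded_lipschitz_on_diff:
  "bounded_lipschitz_on S f \<Longrightarrow> bounded_lipschitz_on S g \<Longrightarrow> bounded_lipschitz_on S (\<lambda>z. f z - g z)"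
  using bounded_lipschitz_on_add[of S f "\<lambda>z. - g z"] bounded_lipschitz_on_minus[of S g] by simp

lemma bounded_lipschitz_on_cong:
  "bounded_lipschitz_on S f \<Longrightarrow> (\<And>z. z \<in> S \<Longrightarrow> f z = g z) \<Longrightarrow> bounded_lipschitz_on S g"
  unfolding bounded_lipschitz_on_def lipschitz_on_def by (metis image_cong)

lemma bounded_lipschitz_on_bilinear:
  assumes m: "bounded_bilinear m"
    and f: "bounded_lipschitz_on S f" and g: "bounded_lipschitz_on S g"
  shows "bounded_lipschitz_on S (\<lambda>z. m (f z) (g z))"
proof -
  obtain Bf Lf where bf: "\<And>z. z \<in> S \<Longrightarrow> norm (f z) \<le> Bf" "0 \<le> Bf" and lf: "Lf-lipschitz_on S f"
    by (rule bounded_lipschitz_onE[OF f]) blast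
  obtain Bg Lg where bg: "\<And>z. z \<in> S \<Longrightarrow> norm (g z) \<le> Bg" "0 \<le> Bg" and lg: "Lg-lipschitz_on S g"
    by (rule bounded_lipschitz_onE[OF g]) blast
  obtain K where K: "\<And>a b. norm (m a b) \<le> norm a * norm b * K" "0 < K"
    using bounded_bilinear.pos_bounded[OF m] by blast
  have "0 \<le> Lf" "0 \<le> Lg" using lf lg by (auto intro: lipschitz_on_nonneg)
  show ?thesis
  proof (rule bounded_lipschitz_onI)
    fix z assume z: "z \<in> S"
    have "norm (m (f z) (g z)) \<le> norm (f z) * norm (g z) * K" by (rule K)
    also have "\<dots> \<le> Bf * Bg * K"
      using bf bg(1)[OF z] K(2) z by (intro mult_right_mono mult_mono) auto
    finally show "norm (m (f z) (g z)) \<le> Bf * Bg * K" .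
  next
    show "(K * (Lf * Bg + Bf * Lg))-lipschitz_on S (\<lambda>z. m (f z) (g z))"
    proof (rule lipschitz_onI)
      fix x y assume x: "x \<in> S" and y: "y \<in> S"
      have "m (f x) (g x) - m (f y) (g y) = m (f x - f y) (g x) + m (f y) (g x - g y)"
        by (simp add: bounded_bilinear.diff_left[OF m] bounded_bilinear.diff_right[OF m])
      then have "dist (m (f x) (g x)) (m (f y) (g y))
          \<le> norm (m (f x - f y) (g x)) + norm (m (f y) (g x - g y))"
        by (simp add: dist_norm norm_triangle_ineq)
      also have "\<dots> \<le> norm (f x - f y) * norm (g x) * K + norm (f y) * norm (g x - g y) * K"
        by (intro add_mono K)
      also have "\<dots> \<le> (Lf * dist x y) * Bg * K + Bf * (Lg * dist x y) * K"
        using lipschitz_onD[OF lf x y] lipschitz_onD[OF lg x y] bf(1)[OF y] bg(1)[OF x]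
          K(2) \<open>0 \<le> Lf\<close> \<open>0 \<le> Lg\<close> bf(2) bg(2)
        by (intro add_mono mult_right_mono mult_mono) (auto simp: dist_norm)
      finally show "dist (m (f x) (g x)) (m (f y) (g y)) \<le> K * (Lf * Bg + Bf * Lg) * dist x y"
        by (simp add: algebra_simps)
    qed (use K(2) \<open>0 \<le> Lf\<close> \<open>0 \<le> Lg\<close> bf(2) bg(2) in auto)
  qed
qed

lemma bounded_lipschitz_on_linear:
  assumes h: "bounded_linear h" and f: "bounded_lipschitz_on S f"
  shows "bounded_lipschitz_on S (\<lambda>z. h (f z))"
proof -
  obtain B L where B: "\<And>z. z \<in> S \<Longrightarrow> norm (f z) \<le> B" and L: "L-lipschitz_on S f"
    by (rule bounded_lipschitz_onE[OF f]) blast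
  obtain K where K: "0 \<le> K" "\<And>x. norm (h x) \<le> norm x * K"
    using bounded_linear.nonneg_bounded[OF h] by blast
  obtain C where C: "C-lipschitz_on (f ` S) h"
    using bounded_linear.lipschitz_boundE[OF h] by blast
  show ?thesis
  proof (rule bounded_lipschitz_onI[OF _ lipschitz_on_compose2[OF L C]])
    show "norm (h (f z)) \<le> B * K" if "z \<in> S" for z
      using K(2)[of "f z"] mult_right_mono[OF B[OF that] K(1)] by linarith
  qed
qed

lemma bounded_lipschitz_on_scaleR:
  "bounded_lipschitz_on S f \<Longrightarrow> bounded_lipschitz_on S g \<Longrightarrow> bounded_lipschitz_on S (\<lambda>z. f z *\<^sub>R g z)"
  by (rule bounded_lipschitz_on_bilinear[OF bounded_bilinear_scaleR])

lemma bounded_lipschitz_on_mult: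
  "bounded_lipschitz_on S f \<Longrightarrow> bounded_lipschitz_on S g \<Longrightarrow> bounded_lipschitz_on S (\<lambda>z. f z * g z :: real)"
  by (rule bounded_lipschitz_on_bilinear[OF bounded_bilinear_mult])

lemma bounded_lipschitz_on_inner:
  "bounded_lipschitz_on S f \<Longrightarrow> bounded_lipschitz_on S g \<Longrightarrow> bounded_lipschitz_on S (\<lambda>z. f z \<bullet> g z)"
  by (rule bounded_lipschitz_on_bilinear[OF bounded_bilinear_inner])

lemma bounded_lipschitz_on_sum:
  "finite I \<Longrightarrow> (\<And>i. i \<in> I \<Longrightarrow> bounded_lipschitz_on S (f i)) \<Longrightarrow>
    bounded_lipschitz_on S (\<lambda>z. \<Sum>i\<in>I. f i z)"
  by (induction I rule: finite_induct) (auto intro: bounded_lipschitz_on_const bounded_lipschitz_on_add)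

lemma bounded_lipschitz_on_vec_nth:
  "bounded_lipschitz_on S f \<Longrightarrow> bounded_lipschitz_on S (\<lambda>z. f z $ i)"
  by (rule bounded_lipschitz_on_linear[OF bounded_linear_vec_nth])

lemma bounded_lipschitz_on_vec_lambda:
  fixes f :: "'n::finite \<Rightarrow> 'a::metric_space \<Rightarrow> real"
  assumes "\<And>k. bounded_lipschitz_on S (f k)"
  shows "bounded_lipschitz_on S (\<lambda>z. \<chi> k. f k z)"
proof -
  have "bounded_lipschitz_on S (\<lambda>z. \<Sum>k\<in>UNIV. f k z *\<^sub>R (axis k 1 :: real^'n))"
    by (intro bounded_lipschitz_on_sum bounded_lipschitz_on_scaleR assms bounded_lipschitz_on_const) auto
  then show ?thesis
    by (rule bounded_lipschitz_on_cong) (simp add: vec_eq_iff axis_def if_distrib cong: if_cong)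
qed

lemma bounded_lipschitz_on_Pair:
  assumes "bounded_lipschitz_on S f" "bounded_lipschitz_on S g"
  shows "bounded_lipschitz_on S (\<lambda>z. (f z, g z))"
proof -
  obtain Bf Lf where Bf: "\<And>z. z \<in> S \<Longrightarrow> norm (f z) \<le> Bf" and Lf: "Lf-lipschitz_on S f"
    by (rule bounded_lipschitz_onE[OF assms(1)]) blast
  obtain Bg Lg where Bg: "\<And>z. z \<in> S \<Longrightarrow> norm (g z) \<le> Bg" and Lg: "Lg-lipschitz_on S g"
    by (rule bounded_lipschitz_onE[OF assms(2)]) blast
  show ?thesis
    using Bf Bg by (intro bounded_lipschitz_onI[where B="Bf + Bg", OF _ lipschitz_on_Pair[OF Lf Lg]])
      (auto intro: order_trans[OF norm_Pair_le] add_mono)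
qed

lemma fst_image_cball: "fst ` cball (p, X) r \<subseteq> cball p r"
proof (clarsimp)
  fix q Y assume "dist (p, X) (q, Y) \<le> r"
  then show "dist p q \<le> r" using dist_fst_le[of "(p, X)" "(q, Y)"] by simp
qed

lemma bounded_lipschitz_on_compose_fst:
  assumes "bounded_lipschitz_on P f" "fst ` S \<subseteq> P"
  shows "bounded_lipschitz_on S (\<lambda>z. f (fst z))"
proof -
  obtain B L where "\<And>z. z \<in> P \<Longrightarrow> norm (f z) \<le> B" and L: "L-lipschitz_on P f"
    by (rule bounded_lipschitz_onE[OF assms(1)]) blast
  moreover have "1-lipschitz_on S fst"
    by (rule lipschitz_onI) (simp_all add: dist_fst_le)
  then have "(L * 1)-lipschitz_on S (\<lambda>z. f (fst z))"
    by (rule lipschitz_on_compose2[OF _ lipschitz_on_subset[OF L assms(2)]])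
  ultimately show ?thesis using assms(2) by (intro bounded_lipschitz_onI[where B=B]) auto
qed

lemma bounded_lipschitz_on_snd:
  "bounded (snd ` S) \<Longrightarrow> bounded_lipschitz_on S snd"
  unfolding bounded_lipschitz_on_def
  by (intro conjI exI[of _ 1] lipschitz_onI) (simp_all add: dist_snd_le)

section \<open>Matrices and their inverses\<close>

lemma norm_matrix_vector_mult_le: "norm ((A::real^'n^'m) *v x) \<le> norm A * norm x * real CARD('m)"
proof -
  have "norm (A *v x) \<le> (\<Sum>i\<in>UNIV. \<bar>A $ i \<bullet> x\<bar>)"
    using norm_le_l1_cart[of "A *v x"] by (simp add: matrix_vector_mult_def inner_vec_def)
  also have "\<dots> \<le> (\<Sum>i\<in>(UNIV::'m set). norm A * norm x)"
    by (intro sum_mono order_trans[OF Cauchy_Schwarz_ineq2] mult_right_mono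
        Finite_Cartesian_Product.norm_nth_le) simp
  finally show ?thesis by (simp add: mult_ac)
qed

lemma bounded_bilinear_matrix_vector_mult: "bounded_bilinear (\<lambda>(A::real^'n^'m) x. A *v x)"
proof
  fix A A' :: "real^'n^'m" and x x' :: "real^'n" and r :: real
  show "(A + A') *v x = A *v x + A' *v x" by (simp add: matrix_vector_mult_add_rdistrib)
  show "A *v (x + x') = A *v x + A *v x'" by (simp add: matrix_vector_right_distrib)
  show "(r *\<^sub>R A) *v x = r *\<^sub>R (A *v x)" "A *v (r *\<^sub>R x) = r *\<^sub>R (A *v x)"
    by (simp_all add: vec_eq_iff matrix_vector_mult_def sum_distrib_left mult_ac)
  show "\<exists>K. \<forall>A x. norm ((A::real^'n^'m) *v x) \<le> norm A * norm x * K"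
    using norm_matrix_vector_mult_le by blast
qed

lemmas matrix_vector_mult_diff_left = bounded_bilinear.diff_left[OF bounded_bilinear_matrix_vector_mult]
lemmas matrix_vector_mult_diff_right = bounded_bilinear.diff_right[OF bounded_bilinear_matrix_vector_mult]

lemma bounded_lipschitz_on_matrix_vector_mult:
  "bounded_lipschitz_on S f \<Longrightarrow> bounded_lipschitz_on S g \<Longrightarrow>
    bounded_lipschitz_on S (\<lambda>z. (f z :: real^'n^'m) *v g z)"
  by (rule bounded_lipschitz_on_bilinear[OF bounded_bilinear_matrix_vector_mult])

lemma norm_matrix_le_operator_bound:
  fixes M :: "real^'n^'m"
  assumes K: "\<And>w. norm (M *v w) \<le> K * norm w"
  shows "norm M \<le> real CARD('m) * real CARD('n) * K"
proof -
  have entry: "\<bar>M $ i $ j\<bar> \<le> K" for i j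
  proof -
    have "(M *v axis j 1) $ i = M $ i $ j"
      by (simp add: matrix_vector_mult_def axis_def if_distrib cong: if_cong)
    then show ?thesis
      using component_le_norm_cart[of "M *v axis j 1" i] K[of "axis j 1"] by (simp add: norm_axis_1)
  qed
  have "norm M \<le> (\<Sum>i\<in>UNIV. norm (M $ i))"
    unfolding norm_vec_def by (rule L2_set_le_sum) simp
  also have "\<dots> \<le> (\<Sum>i\<in>(UNIV::'m set). \<Sum>j\<in>(UNIV::'n set). K)"
    by (intro sum_mono order_trans[OF norm_le_l1_cart] entry)
  finally show ?thesis by simp
qed

lemma matrix_inv_mult_cancel:
  assumes "invertible (A::real^'n^'n)"
  shows "matrix_inv A *v (A *v y) = y" "A *v (matrix_inv A *v y) = y"
proof -
  have "A ** matrix_inv A = mat 1 \<and> matrix_inv A ** A = mat 1"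
    using assms unfolding invertible_def matrix_inv_def by (rule someI_ex)
  then show "matrix_inv A *v (A *v y) = y" "A *v (matrix_inv A *v y) = y"
    by (simp_all add: matrix_vector_mul_assoc)
qed

lemma invertible_if_positive_definite:
  assumes "\<And>x. x \<noteq> 0 \<Longrightarrow> 0 < x \<bullet> ((A::real^'n^'n) *v x)"
  shows "invertible A"
proof -
  have "\<forall>x. A *v x = 0 \<longrightarrow> x = 0"
    using assms by (metis inner_zero_right less_irrefl)
  then show ?thesis
    using matrix_left_invertible_ker invertible_left_inverse by blast
qed

lemma matrix_inv_diff_mult:
  assumes "invertible (A::real^'n^'n)" "invertible B"
  shows "(matrix_inv A - matrix_inv B) *v w = matrix_inv A *v ((B - A) *v (matrix_inv B *v w))"
  by (simp add: matrix_vector_mult_diff_left matrix_vector_mult_diff_right matrix_inv_mult_cancel assms)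

lemma norm_matrix_inv_mult_le_perturb:
  fixes A B :: "real^'n^'n"
  assumes A: "invertible A" and B: "invertible B"
    and K: "\<And>w. norm (matrix_inv A *v w) \<le> K * norm w"
    and AB: "norm (A - B) * real CARD('n) * K \<le> 1/2"
  shows "norm (matrix_inv B *v w) \<le> 2 * K * norm w"
proof -
  have "0 \<le> K" using K[of "axis undefined 1"] by (auto intro: order_trans[OF norm_ge_zero])
  have "matrix_inv B *v w = matrix_inv A *v w + matrix_inv A *v ((A - B) *v (matrix_inv B *v w))"
    by (simp add: matrix_vector_mult_diff_left matrix_vector_mult_diff_right matrix_inv_mult_cancel A B)
  then have "norm (matrix_inv B *v w)
      \<le> norm (matrix_inv A *v w) + norm (matrix_inv A *v ((A - B) *v (matrix_inv B *v w)))"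
    by (metis norm_triangle_ineq)
  also have "\<dots> \<le> K * norm w + K * norm ((A - B) *v (matrix_inv B *v w))"
    by (intro add_mono K)
  also have "K * norm ((A - B) *v (matrix_inv B *v w))
      \<le> K * (norm (A - B) * norm (matrix_inv B *v w) * real CARD('n))"
    by (intro mult_left_mono norm_matrix_vector_mult_le \<open>0 \<le> K\<close>)
  also have "\<dots> = (norm (A - B) * real CARD('n) * K) * norm (matrix_inv B *v w)"
    by (simp add: algebra_simps)
  also have "\<dots> \<le> 1/2 * norm (matrix_inv B *v w)" by (intro mult_right_mono AB) simp
  finally show ?thesis by simp
qed

lemma bounded_lipschitz_on_matrix_inv:
  fixes g :: "'a::metric_space \<Rightarrow> real^'n^'n"
  assumes inv: "\<And>x. x \<in> S \<Longrightarrow> invertible (g x)" and L: "L-lipschitz_on S g"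
    and K: "\<And>x w. x \<in> S \<Longrightarrow> norm (matrix_inv (g x) *v w) \<le> K * norm w" and "0 \<le> K"
  shows "bounded_lipschitz_on S (\<lambda>x. matrix_inv (g x))"
proof (rule bounded_lipschitz_onI)
  define c where "c = real CARD('n)"
  show "norm (matrix_inv (g x)) \<le> c * c * K" if "x \<in> S" for x
    unfolding c_def by (rule norm_matrix_le_operator_bound[OF K[OF that]])
  show "(c * c * (K * (L * c * K)))-lipschitz_on S (\<lambda>x. matrix_inv (g x))"
  proof (rule lipschitz_onI)
    fix x y assume x: "x \<in> S" and y: "y \<in> S"
    have "norm ((matrix_inv (g x) - matrix_inv (g y)) *v w) \<le> K * (L * dist x y * c * K) * norm w" for w
    proof -
      have "norm ((g y - g x) *v (matrix_inv (g y) *v w))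
          \<le> norm (g y - g x) * norm (matrix_inv (g y) *v w) * c"
        unfolding c_def by (rule norm_matrix_vector_mult_le)
      also have "\<dots> \<le> (L * dist x y) * (K * norm w) * c"
        using lipschitz_onD[OF L y x] K[OF y, of w] lipschitz_on_nonneg[OF L]
        by (intro mult_right_mono mult_mono) (auto simp: dist_norm dist_commute c_def)
      finally have "norm ((g y - g x) *v (matrix_inv (g y) *v w)) \<le> (L * dist x y) * (K * norm w) * c" .
      then have "K * norm ((g y - g x) *v (matrix_inv (g y) *v w)) \<le> K * ((L * dist x y) * (K * norm w) * c)"
        by (rule mult_left_mono) fact
      then show ?thesis
        using K[OF x, of "(g y - g x) *v (matrix_inv (g y) *v w)"]
        unfolding matrix_inv_diff_mult[OF inv[OF x] inv[OF y]] by (simp add: algebra_simps)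
    qed
    then have "norm (matrix_inv (g x) - matrix_inv (g y)) \<le> c * c * (K * (L * dist x y * c * K))"
      unfolding c_def by (rule norm_matrix_le_operator_bound)
    then show "dist (matrix_inv (g x)) (matrix_inv (g y)) \<le> c * c * (K * (L * c * K)) * dist x y"
      by (simp add: dist_norm algebra_simps)
  qed (use \<open>0 \<le> K\<close> lipschitz_on_nonneg[OF L] c_def in auto)
qed

lemma matrix_inv_locally_bounded_lipschitz:
  fixes g :: "'a::metric_space \<Rightarrow> real^'n^'n"
  assumes r0: "0 < r0" and g: "bounded_lipschitz_on (cball p r0) g" and cont: "continuous (at p) g"
    and inv: "\<And>x. x \<in> cball p r0 \<Longrightarrow> invertible (g x)"
  obtains r where "0 < r" "r \<le> r0" "bounded_lipschitz_on (cball p r) (\<lambda>x. matrix_inv (g x))"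
proof -
  define c where "c = real CARD('n)"
  define K where "K = norm (matrix_inv (g p)) * c"
  have "0 \<le> K" by (simp add: K_def c_def)
  have Kp: "norm (matrix_inv (g p) *v w) \<le> K * norm w" for w
    using norm_matrix_vector_mult_le[of "matrix_inv (g p)" w] by (simp add: K_def c_def mult_ac)
  have "0 < 1 / (2 * (c * K + 1))" using \<open>0 \<le> K\<close> by (simp add: c_def add_nonneg_pos)
  then obtain d where d: "0 < d" "\<And>x. dist x p < d \<Longrightarrow> dist (g x) (g p) < 1 / (2 * (c * K + 1))"
    using cont unfolding continuous_at_eps_delta by blast
  \<comment> \<open>On \<open>cball p r\<close> the perturbation bound applies with \<open>A = g p\<close>, bounding all inverses by \<open>2 K\<close>.\<close>
  define r where "r = min r0 (d/2)"
  have r: "0 < r" "r \<le> r0" "cball p r \<subseteq> cball p r0" using r0 d(1) by (auto simp: r_def)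
  have close: "norm (g p - g x) * c * K \<le> 1/2" if "x \<in> cball p r" for x
  proof -
    have "dist x p < d" using that d(1) by (auto simp: r_def dist_commute)
    then have "norm (g p - g x) < 1 / (2 * (c * K + 1))"
      using d(2)[of x] by (simp add: dist_norm norm_minus_commute)
    moreover have "0 < 2 * (c * K + 1)" using \<open>0 \<le> K\<close> by (simp add: c_def add_nonneg_pos)
    ultimately have "norm (g p - g x) * (c * K + 1) \<le> 1/2"
      by (simp add: pos_less_divide_eq algebra_simps)
    moreover have "norm (g p - g x) * (c * K) \<le> norm (g p - g x) * (c * K + 1)"
      by (simp add: mult_left_mono)
    ultimately show ?thesis by (simp add: mult_ac)
  qed
  obtain L where L: "L-lipschitz_on (cball p r0) g" by (rule bounded_lipschitz_onE[OF g])
  have "bounded_lipschitz_on (cball p r) (\<lambda>x. matrix_inv (g x))"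
  proof (rule bounded_lipschitz_on_matrix_inv)
    show "invertible (g x)" if "x \<in> cball p r" for x using inv r(3) that by blast
    show "L-lipschitz_on (cball p r) g" by (rule lipschitz_on_subset[OF L r(3)])
    show "norm (matrix_inv (g x) *v w) \<le> (2 * K) * norm w" if "x \<in> cball p r" for x w
      using norm_matrix_inv_mult_le_perturb[OF inv inv Kp close[OF that, unfolded c_def]] r0 r(3) that
      by auto
  qed (use \<open>0 \<le> K\<close> in simp)
  then show ?thesis using that r(1,2) by blast
qed

section \<open>Smooth maps\<close>

lemma iter_dd_append: "iter_dd vs (iter_dd [v] f) = iter_dd (vs @ [v]) f"
  by (induction vs) auto

lemma smooth_on_iter_dd: "smooth_on U f \<Longrightarrow> smooth_on U (iter_dd [v] f)"
  unfolding smooth_on_def iter_dd_append by blast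

lemma smooth_on_differentiable: "smooth_on U f \<Longrightarrow> p \<in> U \<Longrightarrow> f differentiable (at p)"
  unfolding smooth_on_def using iter_dd.simps(1) by metis

lemma frechet_derivative_axis_expansion:
  fixes f :: "real^'n \<Rightarrow> 'b::real_normed_vector"
  assumes "f differentiable (at x)"
  shows "frechet_derivative f (at x) w = (\<Sum>k\<in>UNIV. w $ k *\<^sub>R iter_dd [axis k 1] f x)"
proof -
  have lin: "linear (frechet_derivative f (at x))"
    using assms frechet_derivative_works has_derivative_linear by blast
  have "frechet_derivative f (at x) w = frechet_derivative f (at x) (\<Sum>k\<in>UNIV. w $ k *\<^sub>R axis k 1)"
    using basis_expansion[of w] by (simp add: scalar_mult_eq_scaleR)
  then show ?thesis by (simp add: linear_sum[OF lin] linear_scale[OF lin])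
qed

lemma smooth_on_bounded_lipschitz_on:
  fixes f :: "real^'n \<Rightarrow> 'b::real_normed_vector"
  assumes f: "smooth_on U f" and S: "compact S" "convex S" "S \<subseteq> U"
  shows "bounded_lipschitz_on S f"
proof -
  have diff: "g differentiable (at x)" if "smooth_on U g" "x \<in> S" for g :: "real^'n \<Rightarrow> 'b" and x
    using smooth_on_differentiable[OF that(1)] S(3) that(2) by blast
  have cont: "continuous_on S g" if "smooth_on U g" for g :: "real^'n \<Rightarrow> 'b"
    using diff[OF that] differentiable_imp_continuous_within continuous_at_imp_continuous_on by blast
  define s where "s x = (\<Sum>k\<in>UNIV. norm (iter_dd [axis k 1] f x))" for x
  have "continuous_on S s"
    unfolding s_def by (intro continuous_intros cont smooth_on_iter_dd f)
  then have "bounded (s ` S)" by (rule compact_imp_bounded[OF compact_continuous_image[OF _ S(1)]])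
  then obtain C where C: "\<And>x. x \<in> S \<Longrightarrow> s x \<le> C"
    unfolding bounded_iff by (metis abs_le_D1 image_eqI real_norm_def)
  have onorm: "onorm (frechet_derivative f (at x)) \<le> max C 0" if x: "x \<in> S" for x
  proof (rule onorm_le)
    fix y
    have "norm (frechet_derivative f (at x) y) \<le> (\<Sum>k\<in>UNIV. norm (y $ k *\<^sub>R iter_dd [axis k 1] f x))"
      unfolding frechet_derivative_axis_expansion[OF diff[OF f x]] by (rule norm_sum)
    also have "\<dots> \<le> (\<Sum>k\<in>UNIV. norm y * norm (iter_dd [axis k 1] f x))"
      by (intro sum_mono) (simp add: mult_right_mono component_le_norm_cart)
    also have "\<dots> = s x * norm y" by (simp add: s_def sum_distrib_left mult.commute)
    also have "\<dots> \<le> max C 0 * norm y" using C[OF x] by (intro mult_right_mono) auto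
    finally show "norm (frechet_derivative f (at x) y) \<le> max C 0 * norm y" .
  qed
  obtain B where "\<And>x. x \<in> S \<Longrightarrow> norm (f x) \<le> B"
    using compact_imp_bounded[OF compact_continuous_image[OF cont[OF f] S(1)]] unfolding bounded_iff by blast
  moreover have "(max C 0)-lipschitz_on S f"
    using diff[OF f] onorm S(2)
    by (intro bounded_derivative_imp_lipschitz)
      (auto intro: has_derivative_at_withinI simp: frechet_derivative_works)
  ultimately show ?thesis by (rule bounded_lipschitz_onI)
qed

section \<open>Regularity of the Christoffel map of the Weyl connection\<close>

lemma bounded_lipschitz_on_frechet_derivative:
  fixes f :: "real^'n \<Rightarrow> 'b::real_normed_vector"
  assumes "\<And>z. z \<in> S \<Longrightarrow> f differentiable (at (fst z))"
    and "\<And>k. bounded_lipschitz_on S (\<lambda>z. iter_dd [axis k 1] f (fst z))"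
    and "bounded_lipschitz_on S X"
  shows "bounded_lipschitz_on S (\<lambda>z. frechet_derivative f (at (fst z)) (X z))"
proof (rule bounded_lipschitz_on_cong)
  show "bounded_lipschitz_on S (\<lambda>z. \<Sum>k\<in>UNIV. X z $ k *\<^sub>R iter_dd [axis k 1] f (fst z))"
    by (intro bounded_lipschitz_on_sum bounded_lipschitz_on_scaleR bounded_lipschitz_on_vec_nth assms) auto
qed (simp add: frechet_derivative_axis_expansion assms(1))

context
  fixes g J :: "real^'n \<Rightarrow> real^'n^'n" and S :: "((real^'n) \<times> (real^'n)) set"
  assumes diff_g: "\<And>z. z \<in> S \<Longrightarrow> g differentiable (at (fst z))"
    and diff_J: "\<And>z. z \<in> S \<Longrightarrow> J differentiable (at (fst z))"
    and g: "bounded_lipschitz_on S (\<lambda>z. g (fst z))" and J: "bounded_lipschitz_on S (\<lambda>z. J (fst z))"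
    and dg: "\<And>k. bounded_lipschitz_on S (\<lambda>z. iter_dd [axis k 1] g (fst z))"
    and dJ: "\<And>k. bounded_lipschitz_on S (\<lambda>z. iter_dd [axis k 1] J (fst z))"
    and g_inv: "bounded_lipschitz_on S (\<lambda>z. matrix_inv (g (fst z)))"
begin

lemma bounded_lipschitz_on_LC:
  "bounded_lipschitz_on S X \<Longrightarrow> bounded_lipschitz_on S Y \<Longrightarrow>
    bounded_lipschitz_on S (\<lambda>z. LC g (fst z) (X z) (Y z))"
  unfolding LC_def
  by (intro bounded_lipschitz_on_matrix_vector_mult g_inv bounded_lipschitz_on_vec_lambda
      bounded_lipschitz_on_mult bounded_lipschitz_on_add bounded_lipschitz_on_diff
      bounded_lipschitz_on_inner bounded_lipschitz_on_frechet_derivative diff_g dg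
      bounded_lipschitz_on_const)

lemma bounded_lipschitz_on_covJ_LC:
  "bounded_lipschitz_on S X \<Longrightarrow> bounded_lipschitz_on S Y \<Longrightarrow>
    bounded_lipschitz_on S (\<lambda>z. covJ (LC g) J (fst z) (X z) (Y z))"
  unfolding covJ_def
  by (intro bounded_lipschitz_on_matrix_vector_mult J bounded_lipschitz_on_add bounded_lipschitz_on_diff
      bounded_lipschitz_on_LC bounded_lipschitz_on_frechet_derivative diff_J dJ)

lemma bounded_lipschitz_on_Bform:
  "bounded_lipschitz_on S Y \<Longrightarrow> bounded_lipschitz_on S (\<lambda>z. Bform g J (fst z) (Y z))"
  unfolding Bform_def
  by (intro bounded_lipschitz_on_mult bounded_lipschitz_on_const bounded_lipschitz_on_sum
      bounded_lipschitz_on_vec_nth bounded_lipschitz_on_matrix_vector_mult J bounded_lipschitz_on_covJ_LC)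
    auto

lemma bounded_lipschitz_on_Bsharp: "bounded_lipschitz_on S (\<lambda>z. Bsharp g J (fst z))"
  unfolding Bsharp_def
  by (intro bounded_lipschitz_on_matrix_vector_mult g_inv bounded_lipschitz_on_vec_lambda
      bounded_lipschitz_on_Bform bounded_lipschitz_on_const)

lemma bounded_lipschitz_on_Gam_c:
  "bounded_lipschitz_on S X \<Longrightarrow> bounded_lipschitz_on S Y \<Longrightarrow>
    bounded_lipschitz_on S (\<lambda>z. Gam_c g J (fst z) (X z) (Y z))"
  unfolding Gam_c_def gip_def
  by (intro bounded_lipschitz_on_add bounded_lipschitz_on_diff bounded_lipschitz_on_LC
      bounded_lipschitz_on_scaleR bounded_lipschitz_on_Bform bounded_lipschitz_on_inner
      bounded_lipschitz_on_matrix_vector_mult g bounded_lipschitz_on_Bsharp)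

end

lemma Gam_c_diag_locally_bounded_lipschitz:
  fixes U :: "(real^'n) set" and g J :: "real^'n \<Rightarrow> real^'n^'n"
  assumes cah: "conf_almost_hermitian U g J" and p: "p \<in> U"
  obtains r where "0 < r" "cball p r \<subseteq> U"
    "\<And>X. bounded_lipschitz_on (cball (p, X) r) (\<lambda>z. Gam_c g J (fst z) (snd z) (snd z))"
proof -
  have U: "open U" and smooth_g: "smooth_on U g" and smooth_J: "smooth_on U J"
    using cah unfolding conf_almost_hermitian_def by auto
  have inv: "invertible (g x)" if "x \<in> U" for x
    using cah that unfolding conf_almost_hermitian_def gip_def
    by (intro invertible_if_positive_definite) blast
  obtain r0 where r0: "0 < r0" "cball p r0 \<subseteq> U" using U p open_contains_cball by blast
  have smooth_bl: "bounded_lipschitz_on (cball p r) f"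
    if "smooth_on U f" "r \<le> r0" for f :: "real^'n \<Rightarrow> real^'n^'n" and r
    using that r0(2) by (intro smooth_on_bounded_lipschitz_on) auto
  obtain r where r: "0 < r" "r \<le> r0" and g_inv: "bounded_lipschitz_on (cball p r) (\<lambda>x. matrix_inv (g x))"
    using matrix_inv_locally_bounded_lipschitz[OF r0(1) smooth_bl[OF smooth_g order_refl]]
      differentiable_imp_continuous_within[OF smooth_on_differentiable[OF smooth_g p]] inv r0(2)
    by blast
  have ball: "cball p r \<subseteq> U" using r r0(2) by auto
  show ?thesis
  proof (rule that[OF r(1) ball])
    fix X :: "real^'n"
    let ?S = "cball (p, X) r"
    have fst: "fst ` ?S \<subseteq> cball p r" by (rule fst_image_cball)
    have snd: "bounded_lipschitz_on ?S snd"
      by (rule bounded_lipschitz_on_snd[OF bounded_linear_image[OF bounded_cball bounded_linear_snd]])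
    show "bounded_lipschitz_on ?S (\<lambda>z. Gam_c g J (fst z) (snd z) (snd z))"
    proof (rule bounded_lipschitz_on_Gam_c[OF _ _ _ _ _ _ _ snd snd])
      show "g differentiable (at (fst z))" "J differentiable (at (fst z))" if "z \<in> ?S" for z
      proof -
        have "fst z \<in> U" using fst ball that by blast
        then show "g differentiable (at (fst z))" "J differentiable (at (fst z))"
          using smooth_on_differentiable smooth_g smooth_J by blast+
      qed
    qed (intro bounded_lipschitz_on_compose_fst[OF _ fst] smooth_bl smooth_on_iter_dd smooth_g smooth_J g_inv r(2))+
  qed
qed

section \<open>Geodesics\<close>

lemma geodesic_if_first_order_solution:
  fixes z :: "real \<Rightarrow> (real^'n) \<times> (real^'n)"
  assumes I: "open I"
    and z: "\<And>t. t \<in> I \<Longrightarrow>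
      (z has_vector_derivative (snd (z t), - Gam (fst (z t)) (snd (z t)) (snd (z t)))) (at t)"
    and U: "\<And>t. t \<in> I \<Longrightarrow> fst (z t) \<in> U"
  shows "geodesic Gam U I (\<lambda>t. fst (z t))"
    and "\<And>t. t \<in> I \<Longrightarrow> vector_derivative (\<lambda>t. fst (z t)) (at t) = snd (z t)"
proof -
  have fst_deriv: "((\<lambda>t. fst (z t)) has_vector_derivative snd (z t)) (at t)" if "t \<in> I" for t
    using bounded_linear.has_vector_derivative[OF bounded_linear_fst z[OF that]] by simp
  show velocity: "vector_derivative (\<lambda>t. fst (z t)) (at t) = snd (z t)" if "t \<in> I" for t
    by (rule vector_derivative_at[OF fst_deriv[OF that]])
  have accel: "((\<lambda>s. vector_derivative (\<lambda>t. fst (z t)) (at s)) has_vector_derivative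
      - Gam (fst (z t)) (snd (z t)) (snd (z t))) (at t)" if t: "t \<in> I" for t
  proof (rule has_vector_derivative_transform_within_open[OF _ I t])
    show "((\<lambda>s. snd (z s)) has_vector_derivative - Gam (fst (z t)) (snd (z t)) (snd (z t))) (at t)"
      using bounded_linear.has_vector_derivative[OF bounded_linear_snd z[OF t]] by simp
  qed (simp add: velocity)
  show "geodesic Gam U I (\<lambda>t. fst (z t))"
    unfolding geodesic_def
  proof (intro ballI conjI)
    fix t assume t: "t \<in> I"
    show "fst (z t) \<in> U" by (rule U[OF t])
    show "(\<lambda>t. fst (z t)) differentiable (at t)" by (rule differentiableI_vector[OF fst_deriv[OF t]])
    show "(\<lambda>s. vector_derivative (\<lambda>t. fst (z t)) (at s)) differentiable (at t)"
      by (rule differentiableI_vector[OF accel[OF t]])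
    show "vector_derivative (\<lambda>s. vector_derivative (\<lambda>t. fst (z t)) (at s)) (at t)
        + Gam (fst (z t)) (vector_derivative (\<lambda>t. fst (z t)) (at t)) (vector_derivative (\<lambda>t. fst (z t)) (at t)) = 0"
      using vector_derivative_at[OF accel[OF t]] velocity[OF t] by simp
  qed
qed

lemma geodesic_with_initial_data_exists:
  fixes Gam :: "real^'n \<Rightarrow> real^'n \<Rightarrow> real^'n \<Rightarrow> real^'n"
  assumes r: "0 < r" and U: "fst ` cball (p, X) r \<subseteq> U"
    and Gam: "bounded_lipschitz_on (cball (p, X) r) (\<lambda>z. Gam (fst z) (snd z) (snd z))"
  obtains I \<gamma> where "open I" "is_interval I" "0 \<in> I" "geodesic Gam U I \<gamma>"
    "\<gamma> 0 = p" "vector_derivative \<gamma> (at 0) = X"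
proof -
  define H where "H z = (snd z, - Gam (fst z) (snd z) (snd z))" for z :: "(real^'n) \<times> (real^'n)"
  have "bounded_lipschitz_on (cball (p, X) r) H"
    unfolding H_def
    by (intro bounded_lipschitz_on_Pair bounded_lipschitz_on_minus Gam bounded_lipschitz_on_snd
        bounded_linear_image[OF bounded_cball bounded_linear_snd])
  then obtain B L where
    "\<And>z. z \<in> cball (p, X) r \<Longrightarrow> norm (H z) \<le> B" "L-lipschitz_on (cball (p, X) r) H"
    by (rule bounded_lipschitz_onE) blast
  then obtain e z where e: "0 < e" and z0: "z 0 = (p, X)"
    and z: "\<And>t. t \<in> {-e<..<e} \<Longrightarrow>
      z t \<in> cball (p, X) r \<and> (z has_vector_derivative H (z t)) (at t)"
    using local_ode_solution_exists[OF r] by metis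
  have in_U: "fst (z t) \<in> U" if "t \<in> {-e<..<e}" for t using z[OF that] U by blast
  have system: "(z has_vector_derivative (snd (z t), - Gam (fst (z t)) (snd (z t)) (snd (z t)))) (at t)"
    if "t \<in> {-e<..<e}" for t using z[OF that] by (simp add: H_def)
  note geodesic = geodesic_if_first_order_solution[where z=z and Gam=Gam, OF open_greaterThanLessThan[of "-e" e] system in_U]
  show ?thesis
  proof (rule that[OF _ _ _ geodesic(1)])
    show "vector_derivative (\<lambda>t. fst (z t)) (at 0) = X" using geodesic(2)[of 0] e z0 by simp
  qed (use e z0 in \<open>auto simp: is_interval_convex_1\<close>)
qed

lemma same_geodesics_iff_diag_eq:
  assumes geodesic_exists: "\<And>p X. p \<in> U \<Longrightarrow> \<exists>I \<gamma>. open I \<and> is_interval I \<and> 0 \<in> I \<and>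
      geodesic Gam1 U I \<gamma> \<and> \<gamma> 0 = p \<and> vector_derivative \<gamma> (at 0) = X"
  shows "same_geodesics Gam1 Gam2 U \<longleftrightarrow> (\<forall>p\<in>U. \<forall>X. Gam1 p X X = Gam2 p X X)"
proof
  assume same: "same_geodesics Gam1 Gam2 U"
  show "\<forall>p\<in>U. \<forall>X. Gam1 p X X = Gam2 p X X"
  proof (intro ballI allI)
    fix p X assume "p \<in> U"
    then obtain I \<gamma> where I: "open I" "is_interval I" "0 \<in> I" and \<gamma>: "geodesic Gam1 U I \<gamma>"
      and init: "\<gamma> 0 = p" "vector_derivative \<gamma> (at 0) = X"
      using geodesic_exists by blast
    have "geodesic Gam2 U I \<gamma>" using same I \<gamma> unfolding same_geodesics_def by blast
    then show "Gam1 p X X = Gam2 p X X"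
      using \<gamma> I(3) init unfolding geodesic_def by (metis add_left_cancel)
  qed
qed (auto simp: same_geodesics_def geodesic_def)


lemma Gam_c_geodesic_with_initial_data_exists:
  fixes U :: "(real^'n) set" and g J :: "real^'n \<Rightarrow> real^'n^'n"
  assumes "conf_almost_hermitian U g J" "p \<in> U"
  shows "\<exists>I \<gamma>. open I \<and> is_interval I \<and> 0 \<in> I \<and> geodesic (Gam_c g J) U I \<gamma>
    \<and> \<gamma> 0 = p \<and> vector_derivative \<gamma> (at 0) = X"
proof -
  obtain r where r: "0 < r" "cball p r \<subseteq> U"
    and Gam: "\<And>X. bounded_lipschitz_on (cball (p, X) r) (\<lambda>z. Gam_c g J (fst z) (snd z) (snd z))"
    by (rule Gam_c_diag_locally_bounded_lipschitz[OF assms]) blast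
  have "fst ` cball (p, X) r \<subseteq> U" using fst_image_cball r(2) by blast
  then obtain I \<gamma> where "open I" "is_interval I" "0 \<in> I" "geodesic (Gam_c g J) U I \<gamma>"
    "\<gamma> 0 = p" "vector_derivative \<gamma> (at 0) = X"
    by (rule geodesic_with_initial_data_exists[where Gam="Gam_c g J", OF r(1) _ Gam])
  then show ?thesis by blast
qed

section \<open>Comparison of the two connections\<close>

lemma Gam_gc_diag: "Gam_gc g J p X X = Gam_c g J p X X - (1/2) *\<^sub>R (J p *v covJ (Gam_c g J) J p X X)"
  by (simp add: Gam_gc_def Gc_def)

lemma matrix_vector_mult_eq_0_iff_if_square_minus_id:
  assumes "A ** A = - mat 1"
  shows "(A :: real^'n^'n) *v v = 0 \<longleftrightarrow> v = 0"
proof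
  assume "A *v v = 0"
  then have "(A ** A) *v v = 0" by (simp flip: matrix_vector_mul_assoc)
  then show "v = 0"
    using assms by (simp add: bounded_bilinear.minus_left[OF bounded_bilinear_matrix_vector_mult])
qed simp

lemma nearly_kaehler_weyl_iff_diag_eq:
  assumes "\<And>p. p \<in> U \<Longrightarrow> J p ** J p = - mat 1"
  shows "nearly_kaehler_weyl g J U \<longleftrightarrow> (\<forall>p\<in>U. \<forall>X. Gam_c g J p X X = Gam_gc g J p X X)"
  unfolding nearly_kaehler_weyl_def Gam_gc_diag
  using matrix_vector_mult_eq_0_iff_if_square_minus_id[OF assms] by auto

lemma skew_if_diag_zero:
  fixes b :: "'a::ab_group_add \<Rightarrow> 'a \<Rightarrow> 'b::ab_group_add"
  assumes "\<And>X1 X2 Y. b (X1 + X2) Y = b X1 Y + b X2 Y" "\<And>X Y1 Y2. b X (Y1 + Y2) = b X Y1 + b X Y2"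
    and "\<And>X. b X X = 0"
  shows "b X Y + b Y X = 0"
proof -
  have "b (X + Y) (X + Y) = b X X + b X Y + (b Y X + b Y Y)" by (simp add: assms(1,2))
  then show ?thesis by (simp add: assms(3))
qed

lemma covJ_add_left:
  assumes "J differentiable (at p)" and "\<And>W. Gam p (X1 + X2) W = Gam p X1 W + Gam p X2 W"
  shows "covJ Gam J p (X1 + X2) Y = covJ Gam J p X1 Y + covJ Gam J p X2 Y"
  using linear_add[OF has_derivative_linear[OF frechet_derivative_works[THEN iffD1, OF assms(1)]]]
  by (simp add: covJ_def assms(2) matrix_vector_mult_add_rdistrib matrix_vector_right_distrib
      algebra_simps)

lemma covJ_add_right:
  assumes "\<And>W1 W2. Gam p Z (W1 + W2) = Gam p Z W1 + Gam p Z W2"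
  shows "covJ Gam J p Z (Y1 + Y2) = covJ Gam J p Z Y1 + covJ Gam J p Z Y2"
  by (simp add: covJ_def assms matrix_vector_right_distrib algebra_simps)


lemma matrix_vector_mult_vec_lambda_add:
  "(M::real^'n^'m) *v (\<chi> k. a k) + M *v (\<chi> k. b k) = M *v (\<chi> k. a k + b k)"
proof -
  have "(\<chi> k. a k) + (\<chi> k. b k) = (\<chi> k. a k + b k)" by (simp add: vec_eq_iff)
  then show ?thesis by (metis matrix_vector_right_distrib)
qed

context
  fixes g :: "real^'n \<Rightarrow> real^'n^'n" and p :: "real^'n"
  assumes diff_g: "g differentiable (at p)"
begin

lemma dg_linear: "linear (frechet_derivative g (at p))"
  using diff_g frechet_derivative_works has_derivative_linear by blast

lemma LC_add_left: "LC g p (X1 + X2) Y = LC g p X1 Y + LC g p X2 Y"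
  unfolding LC_def matrix_vector_mult_vec_lambda_add
  by (intro arg_cong[where f="(*v) (matrix_inv (g p))"])
    (simp add: vec_eq_iff linear_add[OF dg_linear] inner_add_left inner_add_right matrix_vector_mult_add_rdistrib
      matrix_vector_right_distrib algebra_simps)

lemma LC_add_right: "LC g p X (Y1 + Y2) = LC g p X Y1 + LC g p X Y2"
  unfolding LC_def matrix_vector_mult_vec_lambda_add
  by (intro arg_cong[where f="(*v) (matrix_inv (g p))"])
    (simp add: vec_eq_iff linear_add[OF dg_linear] inner_add_left inner_add_right matrix_vector_mult_add_rdistrib
      matrix_vector_right_distrib algebra_simps)

lemma Bform_add: "Bform g J p (Y1 + Y2) = Bform g J p Y1 + Bform g J p Y2"
proof -
  have "covJ (LC g) J p Z (Y1 + Y2) = covJ (LC g) J p Z Y1 + covJ (LC g) J p Z Y2" for Z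
    by (rule covJ_add_right) (rule LC_add_right)
  then show ?thesis
    unfolding Bform_def by (simp add: matrix_vector_right_distrib sum.distrib distrib_left)
qed

lemma Gam_c_add_left: "Gam_c g J p (X1 + X2) Y = Gam_c g J p X1 Y + Gam_c g J p X2 Y"
  unfolding Gam_c_def gip_def by (simp add: LC_add_left Bform_add inner_add_left algebra_simps)

lemma Gam_c_add_right: "Gam_c g J p X (Y1 + Y2) = Gam_c g J p X Y1 + Gam_c g J p X Y2"
  unfolding Gam_c_def gip_def
  by (simp add: LC_add_right Bform_add inner_add_right matrix_vector_right_distrib algebra_simps)

end

lemma nearly_kaehler_weyl_imp_proj_equiv:
  assumes cah: "conf_almost_hermitian U g J" and nkw: "nearly_kaehler_weyl g J U"
  shows "proj_equiv (Gam_c g J) (Gam_gc g J) U"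
  unfolding proj_equiv_def
proof (intro exI[of _ "\<lambda>_ _. 0"] ballI conjI allI)
  fix p X Y assume p: "p \<in> U"
  have diff: "g differentiable (at p)" "J differentiable (at p)"
    using cah p smooth_on_differentiable unfolding conf_almost_hermitian_def by blast+
  have skew: "covJ (Gam_c g J) J p X Y + covJ (Gam_c g J) J p Y X = 0"
    using nkw p unfolding nearly_kaehler_weyl_def
    by (intro skew_if_diag_zero covJ_add_left[OF diff(2)] covJ_add_right
        Gam_c_add_left[OF diff(1)] Gam_c_add_right[OF diff(1)]) auto
  have "Gam_gc g J p X Y + Gam_gc g J p Y X = Gam_c g J p X Y + Gam_c g J p Y X
      - (1/2) *\<^sub>R (J p *v (covJ (Gam_c g J) J p X Y + covJ (Gam_c g J) J p Y X))"
    by (simp add: Gam_gc_def Gc_def matrix_vector_right_distrib algebra_simps)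
  then show "(1/2) *\<^sub>R (Gam_gc g J p X Y + Gam_gc g J p Y X) - (1/2) *\<^sub>R (Gam_c g J p X Y + Gam_c g J p Y X)
      = 0 *\<^sub>R Y + 0 *\<^sub>R X"
    using skew by simp
qed (simp add: linear_zero)

theorem proposition4p14:
  fixes U :: "(real^'n) set" and g J :: "real^'n \<Rightarrow> real^'n^'n"
  assumes "CARD('n) \<ge> 4"
    and "conf_almost_hermitian U g J"
  shows "(nearly_kaehler_weyl g J U \<longleftrightarrow> same_geodesics (Gam_c g J) (Gam_gc g J) U)
    \<and> (nearly_kaehler_weyl g J U \<longrightarrow> proj_equiv (Gam_c g J) (Gam_gc g J) U)"
proof -
  \<comment> \<open>The dimension bound only makes the factor \<open>1/(n-2)\<close> in \<open>Bform\<close> meaningful.\<close>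
  have "nearly_kaehler_weyl g J U \<longleftrightarrow> (\<forall>p\<in>U. \<forall>X. Gam_c g J p X X = Gam_gc g J p X X)"
    using assms(2) by (intro nearly_kaehler_weyl_iff_diag_eq) (simp add: conf_almost_hermitian_def)
  also have "\<dots> \<longleftrightarrow> same_geodesics (Gam_c g J) (Gam_gc g J) U"
    using Gam_c_geodesic_with_initial_data_exists[OF assms(2)]
    by (intro same_geodesics_iff_diag_eq[symmetric]) blast
  finally show ?thesis using nearly_kaehler_weyl_imp_proj_equiv[OF assms(2)] by blast
qed

end
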